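(* Let $p$ be an odd prime and $1\le\ell\le p-1$ with Legendre symbol $\left(\frac{8\ell+1}{p}\right)=-1$. Then for all $n\ge0$, $$b\big(4(pn+\ell)\big)\equiv 0\pmod 8.$$ Furthermore, for every odd prime $p$ and all $n,k\ge0$, $$b(4n)\equiv b\!\left(4p^{2k+2}n+\frac{p^{2k+2}-1}{2}\right)\pmod 8.$$
   Context: The mock theta function $\mathcal{B}(q)=\sum_{n\ge0}\frac{q^n(-q;q^2)_n}{(q;q^2)_{n+1}}=\sum_{n\ge0}b(n)q^n$, where $(a;q)_n=\prod_{j=0}^{n-1}(1-aq^j)$. *)

theory Defs
  imports "HOL-Computational_Algebra.Formal_Power_Series" "HOL-Number_Theory.Number_Theory"
begin

definition qpoch :: "int fps \<Rightarrow> int fps \<Rightarrow> nat \<Rightarrow> int fps" where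
  "qpoch a q n = (\<Prod>j<n. 1 - a * q ^ j)"

text \<open>n-th summand q^n (-q;q^2)_n / (q;q^2)_(n+1); the denominator has constant
  coefficient 1, so its inverse in int fps is the right inverse with constant term 1.\<close>
definition Bterm :: "nat \<Rightarrow> int fps" where
  "Bterm n = fps_X ^ n * qpoch (- fps_X) (fps_X ^ 2) n
             * fps_right_inverse (qpoch fps_X (fps_X ^ 2) (Suc n)) 1"

text \<open>b(m) = coefficient of q^m in B(q); summands with n > m have order > m.\<close>
definition b :: "nat \<Rightarrow> int" where
  "b m = (\<Sum>n\<le>m. fps_nth (Bterm n) m)"

end

theory Submission
  imports Defs "HOL-Computational_Algebra.Nth_Powers"
begin

(* Write B = G_0 with G_m(q) = \<Sum>n q^n (-q;q^2)_n / (q^(2m+1);q^2)_(n+1). Then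
   (1 + q^(2m+2)) G_(m+1) - (1 - q^(4m+2)) G_m = -q^(2m+1), so the even parts satisfy a
   two-term recursion; letting m grow and using Euler's and Gauss's product formulas gives
     even part of B = (q^4;q^4)_\<infinity> / (q^2;q^4)_\<infinity>^4
                    = psi(q^2) (-q^2;q^4)_\<infinity>^2 / (q^2;q^4)_\<infinity>^2,
   where psi(q) = \<Sum>n q^(n(n+1)) = (q^4;q^4)_\<infinity> / (q^2;q^4)_\<infinity>.
   The substitution q \<mapsto> iq swaps (q^2;q^4) and (-q^2;q^4), whose coefficients agree mod 2;
   adding the two identities gives 2 b(4n) \<equiv> 2 [q^(4n)] psi(q^2) (mod 16), that is
   b(4n) \<equiv> [8n+1 is a square] (mod 8). Both congruences follow: 8(pn+l)+1 \<equiv> 8l+1 is a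
   non-residue mod p, and 8N+1 = p^(2k+2) (8n+1) for the index 4N of the second one.
   Infinite products are handled through truncations modulo q^M. *)

unbundle fps_syntax

abbreviation X :: "int fps" where "X \<equiv> fps_X"

section \<open>Truncated equality and inverses of power series\<close>

definition trunc_eq :: "nat \<Rightarrow> int fps \<Rightarrow> int fps \<Rightarrow> bool" where
  "trunc_eq M f g \<longleftrightarrow> (\<forall>k<M. f $ k = g $ k)"

lemma trunc_eq_refl [simp]: "trunc_eq M f f"
  by (simp add: trunc_eq_def)

lemma trunc_eq_sym: "trunc_eq M f g \<Longrightarrow> trunc_eq M g f"
  by (simp add: trunc_eq_def)

lemma trunc_eq_trans [trans]: "trunc_eq M f g \<Longrightarrow> trunc_eq M g h \<Longrightarrow> trunc_eq M f h"
  by (simp add: trunc_eq_def)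

lemma trunc_eq_mono: "trunc_eq M f g \<Longrightarrow> M' \<le> M \<Longrightarrow> trunc_eq M' f g"
  by (simp add: trunc_eq_def)

lemma trunc_eq_iff_diff: "trunc_eq M f g \<longleftrightarrow> trunc_eq M (f - g) 0"
  by (simp add: trunc_eq_def)

lemma trunc_eq_add: "trunc_eq M f f' \<Longrightarrow> trunc_eq M g g' \<Longrightarrow> trunc_eq M (f + g) (f' + g')"
  by (simp add: trunc_eq_def)

lemma trunc_eq_diff: "trunc_eq M f f' \<Longrightarrow> trunc_eq M g g' \<Longrightarrow> trunc_eq M (f - g) (f' - g')"
  by (simp add: trunc_eq_def)

lemma trunc_eq_uminus: "trunc_eq M f f' \<Longrightarrow> trunc_eq M (- f) (- f')"
  by (simp add: trunc_eq_def)

lemma trunc_eq_mult: "trunc_eq M f f' \<Longrightarrow> trunc_eq M g g' \<Longrightarrow> trunc_eq M (f * g) (f' * g')"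
  unfolding trunc_eq_def fps_mult_nth by (auto intro!: sum.cong)

lemma trunc_eq_mult_left: "trunc_eq M g g' \<Longrightarrow> trunc_eq M (f * g) (f * g')"
  by (rule trunc_eq_mult) auto

lemma trunc_eq_mult_right: "trunc_eq M f f' \<Longrightarrow> trunc_eq M (f * g) (f' * g)"
  by (rule trunc_eq_mult) auto

lemma trunc_eq_power: "trunc_eq M f g \<Longrightarrow> trunc_eq M (f ^ n) (g ^ n)"
  by (induction n) (auto intro: trunc_eq_mult)

lemma trunc_eq_prod:
  "(\<And>i. i \<in> S \<Longrightarrow> trunc_eq M (f i) (g i)) \<Longrightarrow> trunc_eq M (prod f S) (prod g S)"
proof (induction S rule: infinite_finite_induct)
  case (insert x F)
  then show ?case by (auto intro: trunc_eq_mult)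
qed auto

lemma trunc_eq_sum:
  "(\<And>i. i \<in> S \<Longrightarrow> trunc_eq M (f i) (g i)) \<Longrightarrow> trunc_eq M (sum f S) (sum g S)"
  by (simp add: trunc_eq_def fps_sum_nth)

lemma trunc_eq_X_power_mult: "M \<le> n \<Longrightarrow> trunc_eq M (X ^ n * f) 0"
  by (simp add: trunc_eq_def fps_X_power_mult_nth)

lemma trunc_eq_X_power: "M \<le> n \<Longrightarrow> trunc_eq M (X ^ n) 0"
  using trunc_eq_X_power_mult[of M n 1] by simp

lemma trunc_eq_telescope:
  assumes "\<And>j. j < m \<Longrightarrow> trunc_eq M (c j * f (Suc j)) (d j * f j)"
  shows "trunc_eq M (f 0 * (\<Prod>j<m. d j)) (f m * (\<Prod>j<m. c j))"
  using assms
proof (induction m)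
  case (Suc m)
  have IH: "trunc_eq M (f 0 * (\<Prod>j<m. d j)) (f m * (\<Prod>j<m. c j))"
    by (rule Suc.IH) (rule Suc.prems, simp)
  have step: "trunc_eq M (c m * f (Suc m)) (d m * f m)"
    by (rule Suc.prems) simp
  have "f 0 * (\<Prod>j<Suc m. d j) = (f 0 * (\<Prod>j<m. d j)) * d m"
    by (simp only: prod.lessThan_Suc mult.assoc)
  also have "trunc_eq M \<dots> ((f m * (\<Prod>j<m. c j)) * d m)"
    by (rule trunc_eq_mult_right[OF IH])
  also have "(f m * (\<Prod>j<m. c j)) * d m = (\<Prod>j<m. c j) * (d m * f m)"
    by (simp only: ac_simps)
  also have "trunc_eq M \<dots> ((\<Prod>j<m. c j) * (c m * f (Suc m)))"
    by (rule trunc_eq_mult_left[OF trunc_eq_sym[OF step]])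
  also have "(\<Prod>j<m. c j) * (c m * f (Suc m)) = f (Suc m) * (\<Prod>j<Suc m. c j)"
    by (simp only: prod.lessThan_Suc ac_simps)
  finally show ?case .
qed simp

text \<open>\<open>fps_right_inverse f 1\<close> is an inverse only if \<open>f $ 0 = 1\<close>; every denominator below
  has constant term 1.\<close>

definition fps_inv1 :: "int fps \<Rightarrow> int fps" where
  "fps_inv1 f = fps_right_inverse f 1"

lemma fps_inv1_right: "f $ 0 = 1 \<Longrightarrow> f * fps_inv1 f = 1"
  unfolding fps_inv1_def by (rule fps_right_inverse) simp

lemma fps_inv1_left: "f $ 0 = 1 \<Longrightarrow> fps_inv1 f * f = 1"
  using fps_inv1_right by (simp add: mult.commute)

lemma fps_inv1_unique:
  assumes "f $ 0 = 1" and "f * g = 1"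
  shows "fps_inv1 f = g"
proof -
  have "fps_inv1 f = fps_inv1 f * (f * g)" using assms(2) by simp
  also have "\<dots> = (f * fps_inv1 f) * g" by (simp add: ac_simps)
  also have "\<dots> = g" using fps_inv1_right[OF assms(1)] by simp
  finally show ?thesis .
qed

lemma fps_inv1_1 [simp]: "fps_inv1 1 = 1"
  by (rule fps_inv1_unique) auto

lemma fps_inv1_mult:
  "f $ 0 = 1 \<Longrightarrow> g $ 0 = 1 \<Longrightarrow> fps_inv1 (f * g) = fps_inv1 f * fps_inv1 g"
  by (rule fps_inv1_unique) (simp_all add: fps_inv1_right ac_simps)

lemma fps_inv1_factor:
  assumes "P = A * Q" "A $ 0 = 1" "Q $ 0 = 1"
  shows "fps_inv1 Q = A * fps_inv1 P"
proof -
  have "fps_inv1 P = fps_inv1 A * fps_inv1 Q" using assms by (simp add: fps_inv1_mult)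
  hence "A * fps_inv1 P = (A * fps_inv1 A) * fps_inv1 Q" by (simp add: ac_simps)
  thus ?thesis using fps_inv1_right[OF assms(2)] by simp
qed

lemma trunc_eq_fps_inv1:
  assumes "trunc_eq M f g" "f $ 0 = 1" "g $ 0 = 1"
  shows "trunc_eq M (fps_inv1 f) (fps_inv1 g)"
proof -
  have "fps_inv1 f * (g - f) * fps_inv1 g
      = fps_inv1 f * (g * fps_inv1 g) - (fps_inv1 f * f) * fps_inv1 g"
    by (simp add: algebra_simps)
  hence "fps_inv1 f - fps_inv1 g = fps_inv1 f * (g - f) * fps_inv1 g"
    by (simp add: fps_inv1_right[OF assms(3)] fps_inv1_left[OF assms(2)])
  moreover have "trunc_eq M (fps_inv1 f * (g - f) * fps_inv1 g) (fps_inv1 f * 0 * fps_inv1 g)"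
    using assms(1) by (intro trunc_eq_mult trunc_eq_refl) (simp add: trunc_eq_def)
  ultimately show ?thesis by (simp add: trunc_eq_iff_diff[of M "fps_inv1 f"])
qed

lemma trunc_eq_cancel:
  assumes "trunc_eq M (f * u) (g * u)" "u $ 0 = 1"
  shows "trunc_eq M f g"
proof -
  have "trunc_eq M (f * u * fps_inv1 u) (g * u * fps_inv1 u)"
    by (rule trunc_eq_mult_right[OF assms(1)])
  thus ?thesis by (simp add: mult.assoc fps_inv1_right[OF assms(2)])
qed

lemma prod_nth_0: "prod f S $ 0 = (\<Prod>i\<in>S. f i $ 0)"
proof (induction S rule: infinite_finite_induct)
  case (insert x F) then show ?case by simp
qed auto

lemma power_mult_swap: "(y::'a::monoid_mult) ^ (k * m) = (y ^ m) ^ k"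
  unfolding mult.commute[of k m] by (rule power_mult)

section \<open>Even parts and the substitution \<open>q \<mapsto> i q\<close>\<close>

definition even_part :: "int fps \<Rightarrow> int fps" where
  "even_part f = Abs_fps (\<lambda>k. if even k then f $ k else 0)"

definition even_fps :: "int fps \<Rightarrow> bool" where
  "even_fps f \<longleftrightarrow> (\<forall>k. odd k \<longrightarrow> f $ k = 0)"

text \<open>On even series, \<open>twist f\<close> is \<open>f(i q)\<close>.\<close>

definition twist :: "int fps \<Rightarrow> int fps" where
  "twist f = Abs_fps (\<lambda>k. (-1) ^ (k div 2) * f $ k)"

lemma even_part_nth [simp]: "even_part f $ k = (if even k then f $ k else 0)"
  by (simp add: even_part_def)

lemma twist_nth [simp]: "twist f $ k = (-1) ^ (k div 2) * f $ k"
  by (simp add: twist_def)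

lemma even_part_add: "even_part (f + g) = even_part f + even_part g"
  by (rule fps_ext) simp

lemma even_part_diff: "even_part (f - g) = even_part f - even_part g"
  by (rule fps_ext) simp

lemma even_part_uminus: "even_part (- f) = - even_part f"
  by (rule fps_ext) simp

lemma even_part_odd_X_power: "odd n \<Longrightarrow> even_part (X ^ n) = 0"
  by (rule fps_ext) auto

lemma even_part_even_fps: "even_fps f \<Longrightarrow> even_part f = f"
  by (rule fps_ext) (auto simp: even_fps_def)

lemma even_fps_1 [simp]: "even_fps 1"
  by (simp add: even_fps_def)

lemma even_fps_X_power: "even n \<Longrightarrow> even_fps (X ^ n)"
  by (auto simp: even_fps_def)

lemma even_fps_add: "even_fps f \<Longrightarrow> even_fps g \<Longrightarrow> even_fps (f + g)"
  by (simp add: even_fps_def)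

lemma even_fps_diff: "even_fps f \<Longrightarrow> even_fps g \<Longrightarrow> even_fps (f - g)"
  by (simp add: even_fps_def)

lemma even_fps_mult:
  assumes "even_fps f" "even_fps g"
  shows "even_fps (f * g)"
  unfolding even_fps_def
proof (intro allI impI)
  fix k :: nat assume "odd k"
  have "f $ i * g $ (k - i) = 0" if "i \<le> k" for i
  proof -
    from \<open>odd k\<close> that have "odd i \<or> odd (k - i)" by auto
    thus ?thesis
      using assms unfolding even_fps_def by (elim disjE) simp_all
  qed
  thus "(f * g) $ k = 0" by (auto simp: fps_mult_nth intro!: sum.neutral)
qed

lemma even_fps_prod: "(\<And>i. i \<in> S \<Longrightarrow> even_fps (f i)) \<Longrightarrow> even_fps (prod f S)"
proof (induction S rule: infinite_finite_induct)
  case (insert x F) then show ?case by (auto intro: even_fps_mult)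
qed auto

lemma even_fps_power: "even_fps f \<Longrightarrow> even_fps (f ^ n)"
  by (induction n) (auto intro: even_fps_mult)

lemma even_fps_one_plus_X_power: "even k \<Longrightarrow> even_fps (1 + X ^ k)"
  by (intro even_fps_add even_fps_1 even_fps_X_power)

lemma even_fps_one_minus_X_power: "even k \<Longrightarrow> even_fps (1 - X ^ k)"
  by (intro even_fps_diff even_fps_1 even_fps_X_power)

lemma even_part_mult_even_fps:
  assumes "even_fps c"
  shows "even_part (c * f) = c * even_part f"
proof (rule fps_ext)
  fix k :: nat
  have "c $ i * even_part f $ (k - i) = (if even k then c $ i * f $ (k - i) else 0)"
    if "i \<le> k" for i
    using that assms by (cases "even i") (auto simp: even_fps_def)
  thus "even_part (c * f) $ k = (c * even_part f) $ k"
    by (auto simp: fps_mult_nth intro: sum.cong)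
qed

lemma trunc_eq_even_part: "trunc_eq M f g \<Longrightarrow> trunc_eq M (even_part f) (even_part g)"
  by (simp add: trunc_eq_def)

lemma trunc_eq_even_part_of_diff:
  assumes "f - g = h + e" "even_part h = 0" "trunc_eq M e 0"
  shows "trunc_eq M (even_part f) (even_part g)"
proof -
  have "even_part f - even_part g = even_part e"
    using arg_cong[OF assms(1), of even_part] assms(2) by (simp add: even_part_diff even_part_add)
  moreover have "even_part 0 = 0" by (rule fps_ext) simp
  hence "trunc_eq M (even_part e) 0" using trunc_eq_even_part[OF assms(3)] by simp
  ultimately show ?thesis by (simp add: trunc_eq_iff_diff[of M "even_part f"])
qed

lemma twist_twist [simp]: "twist (twist f) = f"
  by (rule fps_ext) (simp flip: mult.assoc power_mult_distrib)

lemma twist_1 [simp]: "twist 1 = 1"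
  by (rule fps_ext) simp

lemma twist_add: "twist (f + g) = twist f + twist g"
  by (rule fps_ext) (simp add: algebra_simps)

lemma twist_diff: "twist (f - g) = twist f - twist g"
  by (rule fps_ext) (simp add: algebra_simps)

lemma twist_mult:
  assumes "even_fps f"
  shows "twist (f * g) = twist f * twist g"
proof (rule fps_ext)
  fix k :: nat
  have "(twist f * twist g) $ k = (\<Sum>i=0..k. (-1) ^ (k div 2) * (f $ i * g $ (k - i)))"
    unfolding fps_mult_nth
  proof (rule sum.cong)
    fix i assume "i \<in> {0..k}"
    show "twist f $ i * twist g $ (k - i) = (-1) ^ (k div 2) * (f $ i * g $ (k - i))"
    proof (cases "even i")
      case True
      then obtain j where j: "i = 2 * j" by blast
      with \<open>i \<in> {0..k}\<close> have "k div 2 = j + (k - i) div 2" by auto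
      thus ?thesis using j by (simp add: power_add)
    next
      case False
      thus ?thesis using assms by (simp add: even_fps_def)
    qed
  qed simp
  thus "twist (f * g) $ k = (twist f * twist g) $ k"
    by (simp add: fps_mult_nth sum_distrib_left)
qed

lemma twist_prod:
  "(\<And>i. i \<in> S \<Longrightarrow> even_fps (f i)) \<Longrightarrow> twist (prod f S) = (\<Prod>i\<in>S. twist (f i))"
proof (induction S rule: infinite_finite_induct)
  case (insert x F)
  then show ?case by (simp add: twist_mult)
qed auto

lemma twist_power: "even_fps f \<Longrightarrow> twist (f ^ n) = twist f ^ n"
  by (induction n) (simp_all add: twist_mult even_fps_power)

lemma twist_X_power_4: "4 dvd k \<Longrightarrow> twist (X ^ k) = X ^ k"
proof (elim dvdE)
  fix j assume "k = 4 * j"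
  thus "twist (X ^ k) = X ^ k" by (intro fps_ext) auto
qed

lemma twist_X_power_4_2: "twist (X ^ (4 * k + 2)) = - (X ^ (4 * k + 2))"
proof (rule fps_ext)
  fix n show "twist (X ^ (4 * k + 2)) $ n = (- (X ^ (4 * k + 2))) $ n"
  proof (cases "n = 4 * k + 2")
    case True
    hence "n div 2 = 2 * k + 1" by auto
    thus ?thesis using True by simp
  qed (simp; arith)
qed

lemma trunc_eq_twist: "trunc_eq M f g \<Longrightarrow> trunc_eq M (twist f) (twist g)"
  by (simp add: trunc_eq_def)

section \<open>Finite \<open>q\<close>-Pochhammer products\<close>

text \<open>In \<open>q\<close>-Pochhammer notation, with \<open>y\<close> standing for a power of \<open>q\<close>:
  \<open>poch_neg_1_2 n = (-q;q\<^sup>2)\<^sub>n\<close>, \<open>poch_odd m k = (q\<^bsup>2m+1\<^esup>;q\<^sup>2)\<^sub>k\<close>,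
  \<open>poch_2_4 y m = (y\<^sup>2;y\<^sup>4)\<^sub>m\<close>, \<open>poch_4_4 y m = (y\<^sup>4;y\<^sup>4)\<^sub>m\<close>,
  \<open>poch_neg_2_2 m = (-q\<^sup>2;q\<^sup>2)\<^sub>m\<close>, \<open>poch_neg_2_4 m = (-q\<^sup>2;q\<^sup>4)\<^sub>m\<close> and
  \<open>poch_tail m = (q\<^bsup>2m+2\<^esup>;q\<^sup>2)\<^sub>m\<close>.\<close>

definition poch_neg_1_2 :: "nat \<Rightarrow> int fps" where
  "poch_neg_1_2 n = (\<Prod>j<n. 1 + X ^ (2 * j + 1))"

definition poch_odd :: "nat \<Rightarrow> nat \<Rightarrow> int fps" where
  "poch_odd m k = (\<Prod>j<k. 1 - X ^ (2 * m + 2 * j + 1))"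

definition poch_2_4 :: "int fps \<Rightarrow> nat \<Rightarrow> int fps" where
  "poch_2_4 y m = (\<Prod>j<m. 1 - y ^ (4 * j + 2))"

definition poch_4_4 :: "int fps \<Rightarrow> nat \<Rightarrow> int fps" where
  "poch_4_4 y m = (\<Prod>j<m. 1 - y ^ (4 * j + 4))"

definition poch_neg_2_2 :: "nat \<Rightarrow> int fps" where
  "poch_neg_2_2 m = (\<Prod>j<m. 1 + X ^ (2 * j + 2))"

definition poch_neg_2_4 :: "nat \<Rightarrow> int fps" where
  "poch_neg_2_4 m = (\<Prod>j<m. 1 + X ^ (4 * j + 2))"

definition poch_tail :: "nat \<Rightarrow> int fps" where
  "poch_tail m = (\<Prod>j<m. 1 - X ^ (2 * m + 2 + 2 * j))"

lemma poch_neg_1_2_nth_0 [simp]: "poch_neg_1_2 n $ 0 = 1"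
  unfolding poch_neg_1_2_def prod_nth_0 by simp

lemma poch_odd_nth_0 [simp]: "poch_odd m k $ 0 = 1"
  unfolding poch_odd_def prod_nth_0 by simp

lemma poch_2_4_nth_0: "y $ 0 = 0 \<Longrightarrow> poch_2_4 y m $ 0 = 1"
  unfolding poch_2_4_def prod_nth_0 by (simp add: fps_nth_power_0 power_0_left)

lemma poch_4_4_nth_0: "y $ 0 = 0 \<Longrightarrow> poch_4_4 y m $ 0 = 1"
  unfolding poch_4_4_def prod_nth_0 by (simp add: fps_nth_power_0 power_0_left)

lemma poch_neg_1_2_Suc: "poch_neg_1_2 (Suc n) = poch_neg_1_2 n * (1 + X ^ (2 * n + 1))"
  by (simp add: poch_neg_1_2_def)

lemma poch_odd_Suc: "poch_odd m (Suc k) = poch_odd m k * (1 - X ^ (2 * m + 2 * k + 1))"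
  by (simp add: poch_odd_def)

lemma poch_odd_Suc_shift: "poch_odd m (Suc k) = (1 - X ^ (2 * m + 1)) * poch_odd (Suc m) k"
  unfolding poch_odd_def prod.lessThan_Suc_shift by (simp add: algebra_simps)

lemma poch_2_4_Suc: "poch_2_4 y (Suc m) = poch_2_4 y m * (1 - y ^ (4 * m + 2))"
  by (simp add: poch_2_4_def)

lemma poch_4_4_Suc: "poch_4_4 y (Suc m) = poch_4_4 y m * (1 - y ^ (4 * m + 4))"
  by (simp add: poch_4_4_def)

lemma poch_neg_2_2_Suc: "poch_neg_2_2 (Suc m) = poch_neg_2_2 m * (1 + X ^ (2 * m + 2))"
  by (simp add: poch_neg_2_2_def)

lemma even_fps_poch_2_4: "even_fps (poch_2_4 X m)"
  unfolding poch_2_4_def by (rule even_fps_prod, rule even_fps_one_minus_X_power) simp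

lemma twist_poch_2_4: "twist (poch_2_4 X m) = poch_neg_2_4 m"
proof -
  have "twist (poch_2_4 X m) = (\<Prod>j<m. twist (1 - X ^ (4 * j + 2)))"
    unfolding poch_2_4_def by (rule twist_prod, rule even_fps_one_minus_X_power) simp
  also have "\<dots> = poch_neg_2_4 m"
    unfolding poch_neg_2_4_def twist_diff twist_1 twist_X_power_4_2 by simp
  finally show ?thesis .
qed

lemma trunc_eq_poch_odd_1: "trunc_eq (2 * m + 1) (poch_odd m k) 1"
proof -
  have "trunc_eq (2 * m + 1) (poch_odd m k) (\<Prod>j<k. 1 - 0)"
    unfolding poch_odd_def
    by (rule trunc_eq_prod, rule trunc_eq_diff[OF trunc_eq_refl trunc_eq_X_power]) simp
  thus ?thesis by simp
qed

lemma trunc_eq_poch_tail_1: "trunc_eq (2 * m + 2) (poch_tail m) 1"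
proof -
  have "trunc_eq (2 * m + 2) (poch_tail m) (\<Prod>j<m. 1 - 0)"
    unfolding poch_tail_def
    by (rule trunc_eq_prod, rule trunc_eq_diff[OF trunc_eq_refl trunc_eq_X_power]) simp
  thus ?thesis by simp
qed

lemma trunc_eq_poch_2_4: "m \<le> m' \<Longrightarrow> trunc_eq (4 * m + 2) (poch_2_4 X m') (poch_2_4 X m)"
proof (induction m' rule: dec_induct)
  case (step m')
  have "trunc_eq (4 * m + 2) (1 - X ^ (4 * m' + 2)) (1 - 0)"
    by (rule trunc_eq_diff[OF trunc_eq_refl trunc_eq_X_power]) (use step in simp)
  hence "trunc_eq (4 * m + 2) (poch_2_4 X m' * (1 - X ^ (4 * m' + 2))) (poch_2_4 X m * (1 - 0))"
    by (rule trunc_eq_mult[OF step.IH])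
  thus ?case by (simp add: poch_2_4_Suc)
qed simp

lemma poch_tail_Suc:
  "poch_tail m * (1 - X ^ (4 * m + 2)) * (1 - X ^ (4 * m + 4))
     = (1 - X ^ (2 * m + 2)) * poch_tail (Suc m)"
proof -
  have a1: "2 * m + 2 + 2 * m = 4 * m + 2" by simp
  have a: "poch_tail m * (1 - X ^ (4 * m + 2)) = (\<Prod>i<Suc m. 1 - X ^ (2 * m + 2 + 2 * i))"
    unfolding poch_tail_def prod.lessThan_Suc a1 ..
  have b1: "\<And>i. 2 * m + 2 + 2 * Suc i = 2 * m + 4 + 2 * i" by simp
  have b2: "2 * m + 2 + 2 * 0 = 2 * m + 2" by simp
  have b: "(\<Prod>i<Suc m. 1 - X ^ (2 * m + 2 + 2 * i))
      = (1 - X ^ (2 * m + 2)) * (\<Prod>i<m. 1 - X ^ (2 * m + 4 + 2 * i))"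
    unfolding prod.lessThan_Suc_shift b1 b2 ..
  have c1: "\<And>i. 2 * Suc m + 2 + 2 * i = 2 * m + 4 + 2 * i" by simp
  have c2: "2 * m + 4 + 2 * m = 4 * m + 4" by simp
  have c: "(\<Prod>i<m. 1 - X ^ (2 * m + 4 + 2 * i)) * (1 - X ^ (4 * m + 4)) = poch_tail (Suc m)"
    unfolding poch_tail_def c1 prod.lessThan_Suc c2 ..
  show ?thesis unfolding a b c[symmetric] by (simp only: ac_simps)
qed

lemma one_minus_X_power_nonzero: "0 < k \<Longrightarrow> 1 - X ^ k \<noteq> 0"
proof
  assume "0 < k" "1 - X ^ k = 0"
  hence "(1 - X ^ k) $ 0 = 0" by simp
  thus False using \<open>0 < k\<close> by simp
qed

text \<open>Euler's identity \<open>(-q\<^sup>2;q\<^sup>2)\<^sub>\<infinity> (q\<^sup>2;q\<^sup>4)\<^sub>\<infinity> = 1\<close> at finite level.\<close>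

lemma poch_neg_2_2_mult_poch_2_4: "poch_neg_2_2 m * poch_2_4 X m = poch_tail m"
proof (induction m)
  case 0 then show ?case by (simp add: poch_neg_2_2_def poch_2_4_def poch_tail_def)
next
  case (Suc m)
  have sq: "(1 + X ^ (2 * m + 2)) * (1 - X ^ (2 * m + 2)) = 1 - X ^ (4 * m + 4)"
  proof -
    have e: "(2 * m + 2) + (2 * m + 2) = 4 * m + 4" by simp
    have "X ^ (2 * m + 2) * X ^ (2 * m + 2) = X ^ (4 * m + 4)" by (simp only: power_add[symmetric] e)
    thus ?thesis by (simp add: algebra_simps)
  qed
  have "(1 - X ^ (4 * m + 4)) * (poch_neg_2_2 (Suc m) * poch_2_4 X (Suc m))
      = (1 + X ^ (2 * m + 2)) * (poch_tail m * (1 - X ^ (4 * m + 2)) * (1 - X ^ (4 * m + 4)))"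
    unfolding poch_neg_2_2_Suc poch_2_4_Suc Suc.IH[symmetric] by (simp only: ac_simps)
  also have "\<dots> = ((1 + X ^ (2 * m + 2)) * (1 - X ^ (2 * m + 2))) * poch_tail (Suc m)"
    unfolding poch_tail_Suc by (simp only: ac_simps)
  also have "\<dots> = (1 - X ^ (4 * m + 4)) * poch_tail (Suc m)" unfolding sq ..
  finally show ?case using one_minus_X_power_nonzero[of "4 * m + 4"] by simp
qed

lemma poch_4_4_double:
  "poch_4_4 X (2 * m) = poch_2_4 (X ^ 2) m * poch_4_4 (X ^ 2) m"
proof (induction m)
  case 0 then show ?case by (simp add: poch_4_4_def poch_2_4_def)
next
  case (Suc m)
  have x1: "4 * (2 * m) + 4 = 2 * (4 * m + 2)" by simp
  have x2: "4 * Suc (2 * m) + 4 = 2 * (4 * m + 4)" by simp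
  have x3: "2 * Suc m = Suc (Suc (2 * m))" by simp
  have "poch_4_4 X (2 * Suc m)
      = poch_4_4 X (2 * m) * (1 - X ^ (4 * (2 * m) + 4)) * (1 - X ^ (4 * Suc (2 * m) + 4))"
    unfolding x3 poch_4_4_Suc ..
  also have "\<dots> = (poch_2_4 (X ^ 2) m * (1 - (X ^ 2) ^ (4 * m + 2)))
                  * (poch_4_4 (X ^ 2) m * (1 - (X ^ 2) ^ (4 * m + 4)))"
    unfolding Suc.IH power_mult[symmetric] x1 x2 by (simp only: ac_simps)
  also have "\<dots> = poch_2_4 (X ^ 2) (Suc m) * poch_4_4 (X ^ 2) (Suc m)"
    by (simp only: poch_2_4_Suc poch_4_4_Suc)
  finally show ?case .
qed

lemma poch_2_4_X_squared: "poch_2_4 (X ^ 2) m = poch_2_4 X m * poch_neg_2_4 m"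
  unfolding poch_2_4_def poch_neg_2_4_def prod.distrib[symmetric]
proof (rule prod.cong[OF refl])
  fix j
  have "X ^ (4 * j + 2) * X ^ (4 * j + 2) = (X ^ 2) ^ (4 * j + 2)"
    by (simp add: power_add[symmetric] power_mult[symmetric])
  thus "1 - (X ^ 2) ^ (4 * j + 2) = (1 - X ^ (4 * j + 2)) * (1 + X ^ (4 * j + 2))"
    by (simp add: algebra_simps)
qed

section \<open>The series \<open>G\<^sub>m\<close>\<close>

text \<open>\<open>Bpart m N\<close> is the \<open>N\<close>-th partial sum of
  \<open>G\<^sub>m(q) = \<Sum>\<^sub>n q\<^sup>n (-q;q\<^sup>2)\<^sub>n / (q\<^bsup>2m+1\<^esup>;q\<^sup>2)\<^sub>n\<^sub>+\<^sub>1\<close>, so that \<open>B = G\<^sub>0\<close>;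
  \<open>Bnum N\<close> is that of \<open>\<Sum>\<^sub>n q\<^sup>n (-q;q\<^sup>2)\<^sub>n\<close>, the limit of \<open>G\<^sub>m\<close> as \<open>m \<rightarrow> \<infinity>\<close>.\<close>

definition Bpart :: "nat \<Rightarrow> nat \<Rightarrow> int fps" where
  "Bpart m N = (\<Sum>n<N. X ^ n * poch_neg_1_2 n * fps_inv1 (poch_odd m (Suc n)))"

definition Bnum :: "nat \<Rightarrow> int fps" where
  "Bnum N = (\<Sum>n<N. X ^ n * poch_neg_1_2 n)"

lemma Bterm_eq: "Bterm n = X ^ n * poch_neg_1_2 n * fps_inv1 (poch_odd 0 (Suc n))"
proof -
  have "qpoch (- X) (X ^ 2) n = poch_neg_1_2 n"
    unfolding qpoch_def poch_neg_1_2_def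
    by (rule prod.cong[OF refl]) (simp add: power_mult[symmetric] power_add mult.commute)
  moreover have "qpoch X (X ^ 2) (Suc n) = poch_odd 0 (Suc n)"
    unfolding qpoch_def poch_odd_def
    by (rule prod.cong[OF refl]) (simp add: power_mult[symmetric] power_add mult.commute)
  ultimately show ?thesis unfolding Bterm_def fps_inv1_def by simp
qed

lemma b_eq_Bpart_nth:
  assumes "k < N"
  shows "b k = Bpart 0 N $ k"
proof -
  have "Bpart 0 N $ k = (\<Sum>n<N. Bterm n $ k)"
    unfolding Bpart_def fps_sum_nth Bterm_eq ..
  also have "\<dots> = (\<Sum>n\<le>k. Bterm n $ k)"
  proof (rule sum.mono_neutral_right)
    show "\<forall>n\<in>{..<N} - {..k}. Bterm n $ k = 0"
      unfolding Bterm_eq mult.assoc by (auto simp: fps_X_power_mult_nth)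
  qed (use assms in auto)
  finally show ?thesis unfolding b_def by simp
qed

lemma Bpart_rec:
  "(1 + X ^ (2 * m + 2)) * Bpart (Suc m) N - (1 - X ^ (4 * m + 2)) * Bpart m N
     = - (X ^ (2 * m + 1))
       + (1 - X ^ (2 * m + 1)) * X ^ (2 * m + N + 1) * poch_neg_1_2 N * fps_inv1 (poch_odd m (Suc N))"
proof (induction N)
  case 0
  have "poch_odd m 1 = 1 - X ^ (2 * m + 1)" by (simp add: poch_odd_def)
  hence "(1 - X ^ (2 * m + 1)) * fps_inv1 (poch_odd m 1) = 1"
    using fps_inv1_right[of "poch_odd m 1"] by simp
  hence "(1 - X ^ (2 * m + 1)) * X ^ (2 * m + 1) * fps_inv1 (poch_odd m 1) = X ^ (2 * m + 1)"
    by (metis mult.commute mult.left_commute mult.right_neutral)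
  then show ?case by (simp add: Bpart_def poch_neg_1_2_def)
next
  case (Suc N)
  define D where "D = fps_inv1 (poch_odd m (Suc (Suc N)))"
  have r1: "fps_inv1 (poch_odd m (Suc N)) = (1 - X ^ (2 * m + 2 * Suc N + 1)) * D"
    unfolding D_def by (rule fps_inv1_factor) (auto simp: poch_odd_Suc[of m "Suc N"] mult.commute)
  have r2: "fps_inv1 (poch_odd (Suc m) (Suc N)) = (1 - X ^ (2 * m + 1)) * D"
    unfolding D_def by (rule fps_inv1_factor) (auto simp: poch_odd_Suc_shift[of m "Suc N"])
  define x where "x = X"
  define a where "a = X ^ m"
  define t where "t = X ^ N"
  define C where "C = poch_neg_1_2 N"
  note powers = power_add power_mult_swap[of _ 2] power_mult_swap[of _ 4] power2_eq_square power3_eq_cube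
  have e1: "X ^ (2 * m + 2) = a^2 * x^2" unfolding a_def x_def by (simp add: powers)
  have e2: "X ^ (4 * m + 2) = a^4 * x^2" unfolding a_def x_def by (simp add: powers)
  have e3: "X ^ (2 * m + 1) = a^2 * x" unfolding a_def x_def by (simp add: powers)
  have e4: "X ^ (2 * m + N + 1) = a^2 * t * x" unfolding a_def x_def t_def by (simp add: powers)
  have e5: "X ^ (2 * m + Suc N + 1) = a^2 * t * x^2" unfolding a_def x_def t_def by (simp add: powers)
  have e6: "X ^ (2 * m + 2 * Suc N + 1) = a^2 * t^2 * x^3" unfolding a_def x_def t_def by (simp add: powers)
  have e7: "X ^ (2 * N + 1) = t^2 * x" unfolding x_def t_def by (simp add: powers)
  have IH: "(1 + a^2 * x^2) * Bpart (Suc m) N - (1 - a^4 * x^2) * Bpart m N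
     = - (a^2 * x) + (1 - a^2 * x) * (a^2 * t * x) * C * ((1 - a^2 * t^2 * x^3) * D)"
    using Suc.IH unfolding e1 e2 e3 e4 r1 e6 C_def .
  have G1: "Bpart (Suc m) (Suc N) = Bpart (Suc m) N + t * C * ((1 - X ^ (2 * m + 1)) * D)"
    by (simp add: Bpart_def r2 t_def C_def)
  have G0: "Bpart m (Suc N) = Bpart m N + t * C * ((1 - X ^ (2 * m + 2 * Suc N + 1)) * D)"
    by (simp add: Bpart_def r1 t_def C_def)
  have CS: "poch_neg_1_2 (Suc N) = C * (1 + t^2 * x)"
    unfolding e7[symmetric] by (simp add: poch_neg_1_2_Suc C_def)
  have alg: "(1 + a^2 * x^2) * (Bpart (Suc m) N + t * C * ((1 - a^2 * x) * D)) -
     (1 - a ^ 4 * x^2) * (Bpart m N + t * C * ((1 - a^2 * t^2 * x ^ 3) * D)) -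
     (- (a^2 * x) + (1 - a^2 * x) * (a^2 * t * x^2) * (C * (1 + t^2 * x)) * D)
   = ((1 + a^2 * x^2) * Bpart (Suc m) N - (1 - a ^ 4 * x^2) * Bpart m N) - (- (a^2 * x) +
     (1 - a^2 * x) * (a^2 * t * x) * C * ((1 - a^2 * t^2 * x ^ 3) * D))"
    by (simp add: algebra_simps power2_eq_square power3_eq_cube power4_eq_xxxx)
  show ?case unfolding G1 G0 CS e1 e2 e3 e5 e6 D_def[symmetric]
    using alg IH by simp
qed

lemma trunc_eq_even_part_Bpart_Suc:
  "trunc_eq N ((1 + X ^ (2 * m + 2)) * even_part (Bpart (Suc m) N))
              ((1 - X ^ (4 * m + 2)) * even_part (Bpart m N))"
proof -
  define E where
    "E = X ^ (2 * m + N + 1) * ((1 - X ^ (2 * m + 1)) * poch_neg_1_2 N * fps_inv1 (poch_odd m (Suc N)))"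
  have "(1 + X ^ (2 * m + 2)) * Bpart (Suc m) N - (1 - X ^ (4 * m + 2)) * Bpart m N
      = - (X ^ (2 * m + 1)) + E"
    unfolding Bpart_rec E_def by (simp only: ac_simps)
  moreover have "even_part (- (X ^ (2 * m + 1))) = 0"
    using even_part_odd_X_power[of "2 * m + 1"] by (simp add: even_part_uminus)
  moreover have "trunc_eq N E 0" unfolding E_def by (rule trunc_eq_X_power_mult) simp
  ultimately have "trunc_eq N (even_part ((1 + X ^ (2 * m + 2)) * Bpart (Suc m) N))
                              (even_part ((1 - X ^ (4 * m + 2)) * Bpart m N))"
    by (rule trunc_eq_even_part_of_diff)
  thus ?thesis
    by (simp only: even_part_mult_even_fps even_fps_one_plus_X_power even_fps_one_minus_X_power
        even_add even_mult_iff even_numeral simp_thms)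
qed

lemma trunc_eq_even_part_Bpart_0:
  "trunc_eq N (even_part (Bpart 0 N) * poch_2_4 X m) (even_part (Bpart m N) * poch_neg_2_2 m)"
  unfolding poch_2_4_def poch_neg_2_2_def
  by (rule trunc_eq_telescope[where f = "\<lambda>j. even_part (Bpart j N)"])
    (rule trunc_eq_even_part_Bpart_Suc)

lemma trunc_eq_Bpart_Bnum: "trunc_eq (2 * m + 1) (Bpart m N) (Bnum N)"
  unfolding Bpart_def Bnum_def
proof (rule trunc_eq_sum)
  fix n
  have "trunc_eq (2 * m + 1) (fps_inv1 (poch_odd m (Suc n))) (fps_inv1 1)"
    by (rule trunc_eq_fps_inv1[OF trunc_eq_poch_odd_1]) simp_all
  hence "trunc_eq (2 * m + 1) (X ^ n * poch_neg_1_2 n * fps_inv1 (poch_odd m (Suc n)))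
                              (X ^ n * poch_neg_1_2 n * 1)"
    by (intro trunc_eq_mult_left) simp
  thus "trunc_eq (2 * m + 1) (X ^ n * poch_neg_1_2 n * fps_inv1 (poch_odd m (Suc n))) (X ^ n * poch_neg_1_2 n)"
    by simp
qed

section \<open>The numerator series and \<open>\<Sum>\<^sub>n q\<^bsup>n(n+1)\<^esup>\<close>\<close>

text \<open>\<open>Nser y x K\<close> is the \<open>K\<close>-th partial sum of \<open>\<Sum>\<^sub>n y\<^sup>n \<Prod>\<^sub>i\<^sub><\<^sub>n (x + y\<^bsup>2i+1\<^esup>)\<close>;
  at \<open>x = 1\<close>, \<open>y = q\<close> it is \<open>Bnum\<close>, and for \<open>x \<rightarrow> 0\<close> it tends to \<open>psi y\<close>.\<close>

definition odd_prod :: "'a::comm_ring_1 \<Rightarrow> 'a \<Rightarrow> nat \<Rightarrow> 'a" where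
  "odd_prod y x n = (\<Prod>i<n. x + y ^ (2 * i + 1))"

definition Nser :: "'a::comm_ring_1 \<Rightarrow> 'a \<Rightarrow> nat \<Rightarrow> 'a" where
  "Nser y x K = (\<Sum>n<K. y ^ n * odd_prod y x n)"

definition psi :: "int fps \<Rightarrow> nat \<Rightarrow> int fps" where
  "psi y K = (\<Sum>n<K. y ^ (n * n + n))"

lemma odd_prod_Suc: "odd_prod y x (Suc n) = odd_prod y x n * (x + y ^ (2 * n + 1))"
  by (simp add: odd_prod_def)

lemma odd_prod_mult_square:
  "odd_prod y (x * y\<^sup>2) (Suc n) = y ^ (2 * n + 1) * (1 + x * y) * odd_prod y x n"
proof (induction n)
  case 0 then show ?case by (simp add: odd_prod_def algebra_simps power2_eq_square)
next
  case (Suc n)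
  define t where "t = y ^ n"
  have e1: "y ^ (2 * n + 1) = t\<^sup>2 * y"
    unfolding t_def by (simp add: power_add power_mult_swap)
  have e2: "y ^ (2 * Suc n + 1) = t\<^sup>2 * y ^ 3"
    unfolding t_def by (simp add: power_add power_mult_swap power2_eq_square power3_eq_cube)
  have "odd_prod y (x * y\<^sup>2) (Suc (Suc n))
      = odd_prod y (x * y\<^sup>2) (Suc n) * (x * y\<^sup>2 + y ^ (2 * Suc n + 1))"
    by (rule odd_prod_Suc)
  also have "\<dots> = t\<^sup>2 * y * (1 + x * y) * odd_prod y x n * (x * y\<^sup>2 + t\<^sup>2 * y ^ 3)"
    using Suc.IH unfolding e1 e2 by simp
  also have "\<dots> = t\<^sup>2 * y ^ 3 * (1 + x * y) * (odd_prod y x n * (x + t\<^sup>2 * y))"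
    by (simp add: algebra_simps power2_eq_square power3_eq_cube)
  also have "\<dots> = y ^ (2 * Suc n + 1) * (1 + x * y) * odd_prod y x (Suc n)"
    unfolding e2 odd_prod_Suc e1 by simp
  finally show ?case .
qed

lemma Nser_rec:
  "Nser y (x * y\<^sup>2) (Suc K) + x * y - (1 - x\<^sup>2 * y\<^sup>2) * Nser y x (Suc K)
     = (1 + x * y) * x * y ^ Suc K * odd_prod y x K"
proof (induction K)
  case 0 then show ?case by (simp add: Nser_def odd_prod_def algebra_simps power2_eq_square)
next
  case (Suc K)
  define t where "t = y ^ K"
  define A where "A = Nser y (x * y\<^sup>2) (Suc K)"
  define C where "C = Nser y x (Suc K)"
  define P where "P = odd_prod y x K"
  have e1: "y ^ (2 * K + 1) = t\<^sup>2 * y" unfolding t_def by (simp add: power_add power_mult_swap)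
  have e2: "y ^ Suc K = t * y" unfolding t_def by simp
  have e3: "y ^ Suc (Suc K) = t * y\<^sup>2" unfolding t_def by (simp add: power2_eq_square)
  have "Nser y (x * y\<^sup>2) (Suc (Suc K)) = A + y ^ Suc K * odd_prod y (x * y\<^sup>2) (Suc K)"
    unfolding A_def by (simp add: Nser_def)
  hence NA: "Nser y (x * y\<^sup>2) (Suc (Suc K)) = A + t * y * (t\<^sup>2 * y * (1 + x * y) * P)"
    unfolding odd_prod_mult_square e1 e2 P_def by simp
  have "Nser y x (Suc (Suc K)) = C + y ^ Suc K * odd_prod y x (Suc K)"
    unfolding C_def by (simp add: Nser_def)
  hence NC: "Nser y x (Suc (Suc K)) = C + t * y * (P * (x + t\<^sup>2 * y))"
    unfolding odd_prod_Suc e1 e2 P_def by simp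
  have IH: "A + x * y - (1 - x\<^sup>2 * y\<^sup>2) * C = (1 + x * y) * x * (t * y) * P"
    using Suc.IH unfolding A_def C_def P_def e2 .
  have "(A + t * y * (t\<^sup>2 * y * (1 + x * y) * P)) + x * y
        - (1 - x\<^sup>2 * y\<^sup>2) * (C + t * y * (P * (x + t\<^sup>2 * y)))
        - (1 + x * y) * x * (t * y\<^sup>2) * (P * (x + t\<^sup>2 * y))
      = (A + x * y - (1 - x\<^sup>2 * y\<^sup>2) * C) - (1 + x * y) * x * (t * y) * P"
    by (simp add: algebra_simps power2_eq_square power3_eq_cube)
  then show ?case unfolding NA NC e3 odd_prod_Suc[of y x K] P_def[symmetric] e1
    using IH by simp
qed

lemma Bnum_eq_Nser: "Bnum K = Nser X 1 K"
  unfolding Nser_def Bnum_def odd_prod_def poch_neg_1_2_def by (simp add: add.commute)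

lemma prod_power_odd: "(\<Prod>i<n. y ^ (2 * i + 1)) = (y::'a::comm_monoid_mult) ^ (n * n)"
proof (induction n)
  case (Suc n)
  have e: "n * n + (2 * n + 1) = Suc n * Suc n" by simp
  have "(\<Prod>i<Suc n. y ^ (2 * i + 1)) = (\<Prod>i<n. y ^ (2 * i + 1)) * y ^ (2 * n + 1)"
    by (rule prod.lessThan_Suc)
  also have "\<dots> = y ^ (n * n + (2 * n + 1))" unfolding Suc.IH by (rule power_add[symmetric])
  finally show ?case unfolding e .
qed simp

lemma trunc_eq_odd_prod:
  assumes "trunc_eq M x 0"
  shows "trunc_eq M (y ^ n * odd_prod y x n) (y ^ (n * n + n))"
proof -
  have "trunc_eq M (odd_prod y x n) (\<Prod>i<n. 0 + y ^ (2 * i + 1))"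
    unfolding odd_prod_def by (rule trunc_eq_prod, rule trunc_eq_add[OF assms trunc_eq_refl])
  hence "trunc_eq M (odd_prod y x n) (y ^ (n * n))"
    by (simp only: add_0 prod_power_odd)
  hence "trunc_eq M (y ^ n * odd_prod y x n) (y ^ n * y ^ (n * n))"
    by (rule trunc_eq_mult_left)
  moreover have "y ^ n * y ^ (n * n) = y ^ (n * n + n)"
    by (simp add: power_add mult.commute)
  ultimately show ?thesis by simp
qed

lemma trunc_eq_Nser_psi: "trunc_eq (2 * m) (Nser X (X ^ (2 * m)) K) (psi X K)"
  unfolding Nser_def psi_def
  by (intro trunc_eq_sum trunc_eq_odd_prod trunc_eq_X_power) simp

lemma even_fps_psi: "even_fps (psi X K)"
  unfolding psi_def
proof (induction K)
  case (Suc K)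
  have "even (K * K + K)" by simp
  then show ?case using Suc by (simp add: even_fps_add even_fps_X_power)
qed (simp add: even_fps_def)

lemma trunc_eq_even_part_Nser_Suc:
  "trunc_eq (Suc K) (even_part (Nser X (X ^ (2 * Suc m)) (Suc K)))
                    ((1 - X ^ (4 * m + 2)) * even_part (Nser X (X ^ (2 * m)) (Suc K)))"
proof -
  let ?x = "X ^ (2 * m) :: int fps"
  define E where "E = X ^ Suc K * ((1 + ?x * X) * ?x * odd_prod X ?x K)"
  have e1: "?x * X\<^sup>2 = X ^ (2 * Suc m)" by (simp add: power_add[symmetric])
  have e2: "?x * X = X ^ (2 * m + 1)" by (simp add: power_add[symmetric])
  have e3: "?x\<^sup>2 * X\<^sup>2 = X ^ (4 * m + 2)"
    by (simp add: power_add[symmetric] power_mult[symmetric] algebra_simps)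
  have "Nser X (?x * X\<^sup>2) (Suc K) + ?x * X - (1 - ?x\<^sup>2 * X\<^sup>2) * Nser X ?x (Suc K)
      = X ^ Suc K * ((1 + ?x * X) * ?x * odd_prod X ?x K)"
    unfolding Nser_rec by (simp only: ac_simps)
  hence "Nser X (X ^ (2 * Suc m)) (Suc K) - (1 - X ^ (4 * m + 2)) * Nser X ?x (Suc K)
      = - (X ^ (2 * m + 1)) + E"
    unfolding e1 e2 e3 E_def by (simp add: algebra_simps)
  moreover have "even_part (- (X ^ (2 * m + 1))) = 0"
    using even_part_odd_X_power[of "2 * m + 1"] by (simp add: even_part_uminus)
  moreover have "trunc_eq (Suc K) E 0" unfolding E_def by (rule trunc_eq_X_power_mult) simp
  ultimately have "trunc_eq (Suc K) (even_part (Nser X (X ^ (2 * Suc m)) (Suc K)))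
                     (even_part ((1 - X ^ (4 * m + 2)) * Nser X ?x (Suc K)))"
    by (rule trunc_eq_even_part_of_diff)
  thus ?thesis
    by (simp only: even_part_mult_even_fps even_fps_one_minus_X_power
        even_add even_mult_iff even_numeral simp_thms)
qed

lemma trunc_eq_even_part_Nser_1:
  "trunc_eq (Suc K) (even_part (Nser X 1 (Suc K)) * poch_2_4 X m)
                    (even_part (Nser X (X ^ (2 * m)) (Suc K)))"
proof -
  have "trunc_eq (Suc K)
          (even_part (Nser X (X ^ (2 * 0)) (Suc K)) * (\<Prod>j<m. 1 - X ^ (4 * j + 2)))
          (even_part (Nser X (X ^ (2 * m)) (Suc K)) * (\<Prod>j<m. 1))"
    by (rule trunc_eq_telescope[where f = "\<lambda>j. even_part (Nser X (X ^ (2 * j)) (Suc K))"])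
      (simp only: mult_1_left trunc_eq_even_part_Nser_Suc)
  thus ?thesis unfolding poch_2_4_def by simp
qed

section \<open>Gauss's identity \<open>\<Sum>\<^sub>n q\<^bsup>n(n+1)\<^esup> = (q\<^sup>4;q\<^sup>4)\<^sub>\<infinity> / (q\<^sup>2;q\<^sup>4)\<^sub>\<infinity>\<close>\<close>

definition euler_sum :: "int fps \<Rightarrow> int fps \<Rightarrow> nat \<Rightarrow> int fps" where
  "euler_sum y z I = (\<Sum>i<I. z ^ i * fps_inv1 (poch_4_4 y i))"

lemma euler_sum_shift:
  assumes "y $ 0 = 0"
  shows "euler_sum y z (Suc I) - euler_sum y (z * y ^ 4) (Suc I) = z * euler_sum y z I"
proof (induction I)
  case 0 then show ?case by (simp add: euler_sum_def poch_4_4_def)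
next
  case (Suc I)
  have "poch_4_4 y (Suc I) = (1 - y ^ (4 * I + 4)) * poch_4_4 y I"
    by (simp add: poch_4_4_Suc mult.commute)
  hence inv: "fps_inv1 (poch_4_4 y I) = (1 - y ^ (4 * I + 4)) * fps_inv1 (poch_4_4 y (Suc I))"
    by (rule fps_inv1_factor) (simp_all add: assms fps_nth_power_0 poch_4_4_nth_0)
  have "euler_sum y z (Suc (Suc I)) - euler_sum y (z * y ^ 4) (Suc (Suc I))
      = (euler_sum y z (Suc I) - euler_sum y (z * y ^ 4) (Suc I))
        + z ^ Suc I * ((1 - y ^ (4 * I + 4)) * fps_inv1 (poch_4_4 y (Suc I)))"
    by (simp add: euler_sum_def algebra_simps power_mult_distrib power_mult[symmetric] mult.commute)
  also have "\<dots> = z * euler_sum y z I + z ^ Suc I * fps_inv1 (poch_4_4 y I)"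
    using Suc.IH inv by simp
  also have "\<dots> = z * euler_sum y z (Suc I)"
    by (simp add: euler_sum_def algebra_simps)
  finally show ?case .
qed

lemma euler_sum_mult_one_minus:
  assumes "y $ 0 = 0"
  shows "euler_sum y z (Suc I) * (1 - z)
           = euler_sum y (z * y ^ 4) (Suc I) - z ^ Suc I * fps_inv1 (poch_4_4 y I)"
proof -
  have "euler_sum y z (Suc I) = euler_sum y z I + z ^ I * fps_inv1 (poch_4_4 y I)"
    by (simp add: euler_sum_def)
  hence "euler_sum y z (Suc I) * (1 - z)
      = euler_sum y z (Suc I) - z * euler_sum y z I - z ^ Suc I * fps_inv1 (poch_4_4 y I)"
    by (simp add: algebra_simps)
  thus ?thesis using euler_sum_shift[OF assms, of z I] by (simp add: algebra_simps)
qed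

lemma trunc_eq_X_power_power_mult: "M \<le> d * k \<Longrightarrow> trunc_eq M ((X ^ d) ^ k * f) 0"
  unfolding power_mult[symmetric] by (rule trunc_eq_X_power_mult)

lemma trunc_eq_euler_sum_step:
  assumes "0 < d"
  shows "trunc_eq (d * Suc I)
           (euler_sum (X ^ d) ((X ^ d) ^ (4 * j + 2)) (Suc I) * (1 - (X ^ d) ^ (4 * j + 2)))
           (euler_sum (X ^ d) ((X ^ d) ^ (4 * Suc j + 2)) (Suc I))"
proof -
  let ?y = "X ^ d :: int fps" and ?z = "(X ^ d) ^ (4 * j + 2) :: int fps"
  have "4 * Suc j + 2 = (4 * j + 2) + 4" by simp
  hence "?z * ?y ^ 4 = ?y ^ (4 * Suc j + 2)" by (simp only: power_add)
  hence "euler_sum ?y ?z (Suc I) * (1 - ?z)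
      = euler_sum ?y (?y ^ (4 * Suc j + 2)) (Suc I) - ?z ^ Suc I * fps_inv1 (poch_4_4 ?y I)"
    using euler_sum_mult_one_minus[of ?y ?z I] assms by simp
  moreover have "trunc_eq (d * Suc I) (?z ^ Suc I * fps_inv1 (poch_4_4 ?y I)) 0"
    unfolding power_mult[of ?y, symmetric]
    by (rule trunc_eq_X_power_power_mult, rule mult_le_mono2) simp
  hence "trunc_eq (d * Suc I)
      (euler_sum ?y (?y ^ (4 * Suc j + 2)) (Suc I) - ?z ^ Suc I * fps_inv1 (poch_4_4 ?y I))
      (euler_sum ?y (?y ^ (4 * Suc j + 2)) (Suc I) - 0)"
    by (rule trunc_eq_diff[OF trunc_eq_refl])
  ultimately show ?thesis by simp
qed

lemma trunc_eq_euler_sum_mult_poch_2_4: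
  assumes "0 < d"
  shows "trunc_eq (d * Suc I) (euler_sum (X ^ d) ((X ^ d)\<^sup>2) (Suc I) * poch_2_4 (X ^ d) m)
                              (euler_sum (X ^ d) ((X ^ d) ^ (4 * m + 2)) (Suc I))"
proof -
  have "trunc_eq (d * Suc I)
          (euler_sum (X ^ d) ((X ^ d) ^ (4 * 0 + 2)) (Suc I) * (\<Prod>j<m. 1 - (X ^ d) ^ (4 * j + 2)))
          (euler_sum (X ^ d) ((X ^ d) ^ (4 * m + 2)) (Suc I) * (\<Prod>j<m. 1))"
  proof (rule trunc_eq_telescope[where f = "\<lambda>j. euler_sum (X ^ d) ((X ^ d) ^ (4 * j + 2)) (Suc I)"])
    fix j
    show "trunc_eq (d * Suc I) (1 * euler_sum (X ^ d) ((X ^ d) ^ (4 * Suc j + 2)) (Suc I))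
            ((1 - (X ^ d) ^ (4 * j + 2)) * euler_sum (X ^ d) ((X ^ d) ^ (4 * j + 2)) (Suc I))"
      using trunc_eq_sym[OF trunc_eq_euler_sum_step[OF assms, of I j]] by (simp add: mult.commute)
  qed
  thus ?thesis unfolding poch_2_4_def by (simp add: power2_eq_square)
qed

lemma trunc_eq_euler_sum_1:
  assumes "0 < d"
  shows "trunc_eq (d * (4 * m + 2)) (euler_sum (X ^ d) ((X ^ d) ^ (4 * m + 2)) (Suc I)) 1"
proof -
  let ?y = "X ^ d :: int fps" and ?M = "d * (4 * m + 2)"
  let ?S = "\<Sum>i<I. (?y ^ (4 * m + 2)) ^ Suc i * fps_inv1 (poch_4_4 ?y (Suc i))"
  have "euler_sum ?y (?y ^ (4 * m + 2)) (Suc I) = 1 + ?S"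
    unfolding euler_sum_def sum.lessThan_Suc_shift by (simp add: poch_4_4_def)
  moreover have "trunc_eq ?M ((?y ^ (4 * m + 2)) ^ Suc i * fps_inv1 (poch_4_4 ?y (Suc i))) 0" for i
    unfolding power_mult[of ?y, symmetric] by (rule trunc_eq_X_power_power_mult) simp
  hence "trunc_eq ?M ?S (\<Sum>i<I. 0)" by (intro trunc_eq_sum)
  hence "trunc_eq ?M (1 + ?S) (1 + 0)" by (intro trunc_eq_add) simp_all
  ultimately show ?thesis by simp
qed

text \<open>The terminating sum \<open>Nfin y m = \<Sum>\<^sub>n y\<^sup>n \<Prod>\<^sub>i\<^sub><\<^sub>n (y\<^bsup>2i+1\<^esup> - y\<^bsup>2m+1\<^esup>)\<close>
  equals \<open>(y\<^sup>4;y\<^sup>4)\<^sub>m\<close> times a partial Euler sum, while its low coefficients are those of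
  \<open>psi y\<close>.\<close>

definition Nfin :: "int fps \<Rightarrow> nat \<Rightarrow> int fps" where
  "Nfin y m = Nser y (- (y ^ (2 * m + 1))) (Suc m)"

lemma odd_prod_eq_0: "m < K \<Longrightarrow> odd_prod y (- (y ^ (2 * m + 1))) K = 0"
  unfolding odd_prod_def by (rule prod_zero) (auto intro!: bexI[of _ m])

lemma Nser_eq_Nfin: "m < K \<Longrightarrow> Nser y (- (y ^ (2 * m + 1))) K = Nfin y m"
proof (induction K)
  case (Suc K)
  show ?case
  proof (cases "m < K")
    case True
    moreover have "odd_prod y (- (y ^ (2 * m + 1))) K = 0" using True by (rule odd_prod_eq_0)
    ultimately show ?thesis using Suc.IH by (simp add: Nser_def)
  next
    case False
    hence "m = K" using Suc.prems by simp
    thus ?thesis by (simp add: Nfin_def)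
  qed
qed simp

lemma Nfin_Suc: "Nfin y (Suc m) = (1 - y ^ (4 * m + 4)) * Nfin y m + y ^ (2 * m + 2)"
proof -
  let ?x = "- (y ^ (2 * m + 1))"
  have e1: "?x * y\<^sup>2 = - (y ^ (2 * Suc m + 1))" by (simp add: power_add power2_eq_square)
  have e2: "?x * y = - (y ^ (2 * m + 2))" by (simp add: power_add)
  have e3: "?x\<^sup>2 * y\<^sup>2 = y ^ (4 * m + 4)"
  proof -
    have a: "?x\<^sup>2 * y\<^sup>2 = (y ^ (2 * m + 1) * y)\<^sup>2" by (simp add: power_mult_distrib)
    have b: "y ^ (2 * m + 1) * y = y ^ (2 * m + 2)" using power_Suc2[of y "2 * m + 1"] by simp
    have "(y ^ (2 * m + 2))\<^sup>2 = y ^ ((2 * m + 2) * 2)" by (simp only: power_mult)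
    also have "(2 * m + 2) * 2 = 4 * m + 4" by simp
    finally show ?thesis unfolding a b .
  qed
  have "Nser y (?x * y\<^sup>2) (Suc (Suc m)) + ?x * y - (1 - ?x\<^sup>2 * y\<^sup>2) * Nser y ?x (Suc (Suc m))
      = (1 + ?x * y) * ?x * y ^ Suc (Suc m) * odd_prod y ?x (Suc m)"
    by (rule Nser_rec)
  moreover have "Nser y ?x (Suc (Suc m)) = Nfin y m" by (rule Nser_eq_Nfin) simp
  moreover have "Nser y (- (y ^ (2 * Suc m + 1))) (Suc (Suc m)) = Nfin y (Suc m)"
    by (simp add: Nfin_def)
  moreover have "odd_prod y ?x (Suc m) = 0" by (rule odd_prod_eq_0) simp
  ultimately show ?thesis unfolding e1 e2 e3 by (simp add: algebra_simps)
qed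

lemma Nfin_eq_poch_4_4_mult_euler_sum:
  assumes "y $ 0 = 0"
  shows "Nfin y m = poch_4_4 y m * euler_sum y (y\<^sup>2) (Suc m)"
proof (induction m)
  case 0 then show ?case by (simp add: Nfin_def Nser_def odd_prod_def poch_4_4_def euler_sum_def)
next
  case (Suc m)
  have inv: "poch_4_4 y (Suc m) * fps_inv1 (poch_4_4 y (Suc m)) = 1"
    by (rule fps_inv1_right) (simp add: poch_4_4_nth_0 assms)
  have sum: "euler_sum y (y\<^sup>2) (Suc (Suc m))
      = euler_sum y (y\<^sup>2) (Suc m) + y ^ (2 * m + 2) * fps_inv1 (poch_4_4 y (Suc m))"
    by (simp add: euler_sum_def power_mult[symmetric] algebra_simps)
  have "Nfin y (Suc m) = (1 - y ^ (4 * m + 4)) * (poch_4_4 y m * euler_sum y (y\<^sup>2) (Suc m)) + y ^ (2 * m + 2)"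
    using Nfin_Suc Suc.IH by simp
  also have "\<dots> = poch_4_4 y (Suc m) * euler_sum y (y\<^sup>2) (Suc m)
                  + y ^ (2 * m + 2) * (poch_4_4 y (Suc m) * fps_inv1 (poch_4_4 y (Suc m)))"
    unfolding inv by (simp add: poch_4_4_Suc algebra_simps)
  also have "\<dots> = poch_4_4 y (Suc m) * euler_sum y (y\<^sup>2) (Suc (Suc m))"
    unfolding sum by (simp add: algebra_simps)
  finally show ?case .
qed

lemma trunc_eq_Nfin_psi:
  assumes "0 < d" and "m < K"
  shows "trunc_eq (d * (2 * m + 1)) (Nfin (X ^ d) m) (psi (X ^ d) K)"
proof -
  let ?y = "X ^ d :: int fps" and ?M = "d * (2 * m + 1)"
  let ?x = "- (?y ^ (2 * m + 1))"
  have "trunc_eq ?M (?y ^ n * odd_prod ?y ?x n) (?y ^ (n * n + n))" for n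
  proof (cases "n \<le> m")
    case True
    have "trunc_eq ?M ?x 0"
      using trunc_eq_uminus[OF trunc_eq_X_power_power_mult[of ?M d "2 * m + 1" 1]] by simp
    thus ?thesis by (rule trunc_eq_odd_prod)
  next
    case False
    hence "2 * m + 1 \<le> n * n + n" using le_square[of n] by linarith
    hence "trunc_eq ?M (?y ^ (n * n + n) * 1) 0"
      by (intro trunc_eq_X_power_power_mult mult_le_mono2)
    moreover have "odd_prod ?y ?x n = 0" using False by (intro odd_prod_eq_0) simp
    ultimately show ?thesis by (simp add: trunc_eq_def)
  qed
  hence "trunc_eq ?M (Nser ?y ?x K) (psi ?y K)"
    unfolding Nser_def psi_def by (intro trunc_eq_sum)
  thus ?thesis unfolding Nser_eq_Nfin[OF assms(2)] .
qed

lemma trunc_eq_psi_mult_poch_2_4: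
  assumes "0 < d" and "m < K"
  shows "trunc_eq (d * Suc m) (psi (X ^ d) K * poch_2_4 (X ^ d) m) (poch_4_4 (X ^ d) m)"
proof -
  let ?y = "X ^ d :: int fps" and ?M = "d * Suc m"
  have "trunc_eq ?M (psi ?y K * poch_2_4 ?y m) (Nfin ?y m * poch_2_4 ?y m)"
    by (rule trunc_eq_mult_right, rule trunc_eq_sym, rule trunc_eq_mono[OF trunc_eq_Nfin_psi[OF assms]])
      simp
  also have "Nfin ?y m * poch_2_4 ?y m = poch_4_4 ?y m * (euler_sum ?y (?y\<^sup>2) (Suc m) * poch_2_4 ?y m)"
    using assms(1) by (simp add: Nfin_eq_poch_4_4_mult_euler_sum mult.assoc)
  also have "trunc_eq ?M \<dots> (poch_4_4 ?y m * 1)"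
  proof (intro trunc_eq_mult_left)
    have "trunc_eq ?M (euler_sum ?y (?y ^ (4 * m + 2)) (Suc m)) 1"
      by (rule trunc_eq_mono[OF trunc_eq_euler_sum_1[OF assms(1)]]) simp
    with trunc_eq_euler_sum_mult_poch_2_4[OF assms(1)]
    show "trunc_eq ?M (euler_sum ?y (?y\<^sup>2) (Suc m) * poch_2_4 ?y m) 1"
      by (rule trunc_eq_trans)
  qed
  finally show ?thesis by simp
qed

section \<open>The even part of \<open>B\<close> modulo 16\<close>

lemma trunc_eq_even_part_B:
  "trunc_eq m (even_part (Bpart 0 (Suc m)) * poch_2_4 X m ^ 4) (poch_4_4 X m)"
proof -
  let ?F = "even_part (Bpart 0 (Suc m))" and ?E = "even_part (Bnum (Suc m))"
  let ?U = "poch_2_4 X m" and ?W = "poch_neg_2_2 m" and ?P = "psi X (Suc m)"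
  have "trunc_eq m (?F * ?U) (even_part (Bpart m (Suc m)) * ?W)"
    by (rule trunc_eq_mono[OF trunc_eq_even_part_Bpart_0]) simp
  moreover have "trunc_eq m (even_part (Bpart m (Suc m)) * ?W) (?E * ?W)"
    by (rule trunc_eq_mult_right, rule trunc_eq_mono[OF trunc_eq_even_part[OF trunc_eq_Bpart_Bnum]])
      simp
  ultimately have FU: "trunc_eq m (?F * ?U) (?E * ?W)"
    by (rule trunc_eq_trans)
  have "trunc_eq m (?E * ?U) (even_part (Nser X (X ^ (2 * m)) (Suc m)))"
    unfolding Bnum_eq_Nser by (rule trunc_eq_mono[OF trunc_eq_even_part_Nser_1]) simp
  moreover have "trunc_eq m (even_part (Nser X (X ^ (2 * m)) (Suc m))) ?P"
    using trunc_eq_mono[OF trunc_eq_even_part[OF trunc_eq_Nser_psi], of m]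
      even_part_even_fps[OF even_fps_psi] by simp
  ultimately have EU: "trunc_eq m (?E * ?U) ?P"
    by (rule trunc_eq_trans)
  have PU: "trunc_eq m (?P * ?U) (poch_4_4 X m)"
    using trunc_eq_mono[OF trunc_eq_psi_mult_poch_2_4[of 1 m "Suc m"]] by simp
  have WU: "trunc_eq m (?W * ?U) 1"
    using trunc_eq_mono[OF trunc_eq_poch_tail_1[of m]]
    unfolding poch_neg_2_2_mult_poch_2_4 by simp
  have "?F * ?U ^ 4 = (?F * ?U) * (?U * ?U * ?U)"
    by (simp add: power4_eq_xxxx ac_simps)
  also have "trunc_eq m \<dots> ((?E * ?W) * (?U * ?U * ?U))"
    by (rule trunc_eq_mult_right[OF FU])
  also have "(?E * ?W) * (?U * ?U * ?U) = (?E * ?U) * ((?W * ?U) * ?U)"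
    by (simp only: ac_simps)
  also have "trunc_eq m \<dots> (?P * (1 * ?U))"
    by (rule trunc_eq_mult[OF EU trunc_eq_mult_right[OF WU]])
  also have "trunc_eq m (?P * (1 * ?U)) (poch_4_4 X m)"
    using PU by simp
  finally show ?thesis .
qed

lemma trunc_eq_poch_4_4_double:
  assumes "m < K"
  shows "trunc_eq (2 * Suc m) (poch_4_4 X (2 * m)) (psi (X ^ 2) K * poch_2_4 (X ^ 2) m ^ 2)"
proof -
  have "trunc_eq (2 * Suc m) (psi (X ^ 2) K * poch_2_4 (X ^ 2) m) (poch_4_4 (X ^ 2) m)"
    using trunc_eq_psi_mult_poch_2_4[of 2 m K] assms by simp
  hence "trunc_eq (2 * Suc m) (poch_2_4 (X ^ 2) m * poch_4_4 (X ^ 2) m)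
                              (poch_2_4 (X ^ 2) m * (psi (X ^ 2) K * poch_2_4 (X ^ 2) m))"
    by (rule trunc_eq_mult_left[OF trunc_eq_sym])
  thus ?thesis unfolding poch_4_4_double by (simp add: power2_eq_square ac_simps)
qed

lemma trunc_eq_even_part_B_psi:
  "trunc_eq (2 * m) (even_part (Bpart 0 (Suc (2 * m))) * poch_2_4 X m ^ 2)
                    (psi (X ^ 2) (Suc (2 * m)) * poch_neg_2_4 m ^ 2)"
proof -
  let ?F = "even_part (Bpart 0 (Suc (2 * m)))" and ?P = "psi (X ^ 2) (Suc (2 * m))"
  let ?u = "poch_2_4 X m" and ?v = "poch_neg_2_4 m"
  have "trunc_eq (2 * m) (poch_2_4 X (2 * m)) ?u"
    by (rule trunc_eq_mono[OF trunc_eq_poch_2_4]) simp_all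
  note u_trunc = trunc_eq_sym[OF this]
  have "?F * ?u ^ 2 * ?u ^ 2 = ?F * ?u ^ 4"
    by (simp add: power4_eq_xxxx power2_eq_square ac_simps)
  also have "trunc_eq (2 * m) \<dots> (?F * poch_2_4 X (2 * m) ^ 4)"
    by (intro trunc_eq_mult_left trunc_eq_power u_trunc)
  also have "trunc_eq (2 * m) \<dots> (poch_4_4 X (2 * m))"
    by (rule trunc_eq_even_part_B)
  also have "trunc_eq (2 * m) \<dots> (?P * poch_2_4 (X ^ 2) m ^ 2)"
    by (rule trunc_eq_mono[OF trunc_eq_poch_4_4_double]) simp_all
  also have "?P * poch_2_4 (X ^ 2) m ^ 2 = ?P * ?v ^ 2 * ?u ^ 2"
    unfolding poch_2_4_X_squared by (simp add: power_mult_distrib ac_simps)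
  finally show ?thesis
    by (rule trunc_eq_cancel) (simp add: power2_eq_square poch_2_4_nth_0)
qed

lemma even_fps_twist: "even_fps f \<Longrightarrow> even_fps (twist f)"
  by (simp add: even_fps_def)

lemma twist_psi_X_squared: "twist (psi (X ^ 2) K) = psi (X ^ 2) K"
  unfolding psi_def
proof (induction K)
  case (Suc K)
  have "even (K * K + K)" by simp
  then obtain t where "K * K + K = 2 * t" by (elim evenE)
  hence "4 dvd 2 * (K * K + K)" by simp
  hence "twist ((X ^ 2) ^ (K * K + K)) = (X ^ 2) ^ (K * K + K)"
    unfolding power_mult[symmetric] by (rule twist_X_power_4)
  then show ?case using Suc by (simp add: twist_add)
qed (simp add: twist_def fps_zero_def)

lemma twist_eq_plus_double: "\<exists>a. twist u = u + 2 * a"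
proof
  let ?a = "Abs_fps (\<lambda>i. (twist u $ i - u $ i) div 2)"
  show "twist u = u + 2 * ?a"
  proof (rule fps_ext)
    fix i
    have "even (twist u $ i - u $ i)" by (cases "even (i div 2)") auto
    thus "twist u $ i = (u + 2 * ?a) $ i" by (simp add: numeral_fps_const)
  qed
qed

lemma fourth_powers_identity:
  fixes u a :: "'a::comm_ring_1"
  shows "(u + 2 * a) ^ 4 + u ^ 4 = 2 * (u\<^sup>2 * (u + 2 * a)\<^sup>2) + 16 * (a\<^sup>2 * (u + a)\<^sup>2)"
  by (simp add: algebra_simps power4_eq_xxxx power2_eq_square)

lemma trunc_eq_twist_square:
  assumes "trunc_eq M (F * u\<^sup>2) (P * twist u ^ 2)" "even_fps u" "twist P = P"
  shows "trunc_eq M (twist F * twist u ^ 2) (P * u\<^sup>2)"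
proof -
  have "twist (F * u\<^sup>2) = twist (u\<^sup>2 * F)" by (simp only: mult.commute)
  also have "\<dots> = twist (u\<^sup>2) * twist F" by (rule twist_mult[OF even_fps_power[OF assms(2)]])
  also have "\<dots> = twist F * twist u ^ 2" unfolding twist_power[OF assms(2)] by (rule mult.commute)
  finally have tw1: "twist (F * u\<^sup>2) = twist F * twist u ^ 2" .
  have "twist (P * twist u ^ 2) = twist (twist u ^ 2 * P)" by (simp only: mult.commute)
  also have "\<dots> = twist (twist u ^ 2) * twist P"
    by (rule twist_mult[OF even_fps_power[OF even_fps_twist[OF assms(2)]]])
  also have "\<dots> = P * u\<^sup>2"
    unfolding twist_power[OF even_fps_twist[OF assms(2)]] twist_twist assms(3) by (rule mult.commute)
  finally have tw2: "twist (P * twist u ^ 2) = P * u\<^sup>2" .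
  show ?thesis using trunc_eq_twist[OF assms(1)] unfolding tw1 tw2 .
qed

text \<open>Adding the identity \<open>F u\<^sup>2 = P u(iq)\<^sup>2\<close> to its image under \<open>q \<mapsto> iq\<close> gives
  \<open>(F + F(iq)) u\<^sup>2 u(iq)\<^sup>2 = P (u\<^sup>4 + u(iq)\<^sup>4)\<close>, and \<open>u(iq) \<equiv> u (mod 2)\<close> makes the right-hand side
  \<open>2 P u\<^sup>2 u(iq)\<^sup>2\<close> modulo 16.\<close>

lemma twist_square_congruence:
  assumes eq: "trunc_eq M (F * u\<^sup>2) (P * twist u ^ 2)"
    and u: "even_fps u" "u $ 0 = 1" and P: "twist P = P"
    and k: "k < M" "4 dvd k"
  shows "[F $ k = P $ k] (mod 8)"
proof -
  define v where "v = twist u"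
  have eq: "trunc_eq M (F * u\<^sup>2) (P * v\<^sup>2)" and eq': "trunc_eq M (twist F * v\<^sup>2) (P * u\<^sup>2)"
    using eq trunc_eq_twist_square[OF eq u(1) P] unfolding v_def by simp_all
  obtain a where a: "v = u + 2 * a" using twist_eq_plus_double unfolding v_def by blast
  define w where "w = u\<^sup>2 * v\<^sup>2"
  define H where "H = a\<^sup>2 * (u + a)\<^sup>2"
  define Z where "Z = P * H * fps_inv1 w"
  have w: "w $ 0 = 1" unfolding w_def v_def using u by (simp add: power2_eq_square)
  have Zw: "Z * w = P * H"
    unfolding Z_def mult.assoc fps_inv1_left[OF w] by simp
  have quartic: "v ^ 4 + u ^ 4 = 2 * w + 16 * H"
    unfolding w_def H_def a by (rule fourth_powers_identity)
  have "(F + twist F) * w = (F * u\<^sup>2) * v\<^sup>2 + (twist F * v\<^sup>2) * u\<^sup>2"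
    unfolding w_def by (simp add: algebra_simps)
  also have "trunc_eq M \<dots> ((P * v\<^sup>2) * v\<^sup>2 + (P * u\<^sup>2) * u\<^sup>2)"
    by (rule trunc_eq_add[OF trunc_eq_mult_right[OF eq] trunc_eq_mult_right[OF eq']])
  also have "(P * v\<^sup>2) * v\<^sup>2 + (P * u\<^sup>2) * u\<^sup>2 = P * (v ^ 4 + u ^ 4)"
    by (simp add: algebra_simps power4_eq_xxxx power2_eq_square)
  also have "\<dots> = 2 * (P * w) + 16 * (Z * w)"
    unfolding quartic Zw by (simp add: algebra_simps)
  also have "\<dots> = (2 * P + 16 * Z) * w"
    by (simp only: distrib_right mult.assoc)
  finally have "trunc_eq M (F + twist F) (2 * P + 16 * Z)"
    by (rule trunc_eq_cancel[OF _ w])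
  hence "(F + twist F) $ k = (2 * P + 16 * Z) $ k"
    using k(1) unfolding trunc_eq_def by blast
  moreover have "(-1::int) ^ (k div 2) = 1" using k(2) by (auto elim!: dvdE)
  ultimately have "F $ k = P $ k + 8 * Z $ k"
    by (simp add: numeral_fps_const)
  thus ?thesis unfolding cong_def by simp
qed

lemma is_square_8n_plus_1_iff: "is_square (8 * n + 1 :: nat) \<longleftrightarrow> (\<exists>k. k * k + k = 2 * n)"
proof
  assume "is_square (8 * n + 1)"
  then obtain s where s: "8 * n + 1 = s\<^sup>2" by (elim is_nth_powerE)
  have "odd (s\<^sup>2)" unfolding s[symmetric] by simp
  hence "odd s" by simp
  then obtain k where k: "s = 2 * k + 1" by (elim oddE)
  have "4 * (k * k + k) = 8 * n" using s unfolding k by (simp add: power2_eq_square algebra_simps)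
  hence "k * k + k = 2 * n" by simp
  thus "\<exists>k. k * k + k = 2 * n" by blast
next
  assume "\<exists>k. k * k + k = 2 * n"
  then obtain k where "k * k + k = 2 * n" by blast
  hence "8 * n + 1 = (2 * k + 1)\<^sup>2" by (simp add: power2_eq_square algebra_simps)
  thus "is_square (8 * n + 1)" by auto
qed

lemma pronic_inj:
  assumes "k * k + k = j * j + (j::nat)"
  shows "k = j"
proof (rule ccontr)
  assume "k \<noteq> j"
  then consider "k < j" | "j < k" by linarith
  thus False
  proof cases
    case 1
    hence "k * k \<le> j * j" by (simp add: mult_le_mono)
    thus False using assms 1 by linarith
  next
    case 2
    hence "j * j \<le> k * k" by (simp add: mult_le_mono)
    thus False using assms 2 by linarith
  qed
qed

lemma psi_X_squared_nth:
  assumes "4 * n < N"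
  shows "psi (X ^ 2) N $ (4 * n) = (if is_square (8 * n + 1) then 1 else 0)"
proof -
  have "psi (X ^ 2) N $ (4 * n) = (\<Sum>k<N. if 4 * n = 2 * (k * k + k) then 1 else 0)"
    unfolding psi_def fps_sum_nth power_mult[symmetric] by simp
  also have "\<dots> = (\<Sum>k<N. if k * k + k = 2 * n then 1 else 0)"
    by (rule sum.cong) auto
  also have "\<dots> = (if \<exists>k. k * k + k = 2 * n then 1 else 0)"
  proof (cases "\<exists>k. k * k + k = 2 * n")
    case True
    then obtain j where j: "j * j + j = 2 * n" by blast
    have "j \<le> j * j + j" by simp
    hence "j < N" using j assms by linarith
    have "(\<Sum>k<N. if k * k + k = 2 * n then 1 else 0) = (\<Sum>k<N. if k = j then 1 else (0::int))"
      by (rule sum.cong[OF refl]) (use j pronic_inj in metis)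
    also have "\<dots> = 1" using \<open>j < N\<close> by simp
    finally show ?thesis using True by simp
  qed simp
  finally show ?thesis unfolding is_square_8n_plus_1_iff .
qed

text \<open>Coefficients of \<open>q\<^bsup>4n\<^esup>\<close> are compared at \<open>m = 2n + 1\<close>, where \<open>4n < 2m\<close>.\<close>

theorem b_4n_cong_mod_8: "[b (4 * n) = (if is_square (8 * n + 1) then 1 else 0)] (mod 8)"
proof -
  let ?m = "2 * n + 1"
  have "[even_part (Bpart 0 (Suc (2 * ?m))) $ (4 * n) = psi (X ^ 2) (Suc (2 * ?m)) $ (4 * n)] (mod 8)"
    by (rule twist_square_congruence[OF trunc_eq_even_part_B_psi[of ?m, folded twist_poch_2_4]])
      (simp_all add: even_fps_poch_2_4 poch_2_4_nth_0 twist_psi_X_squared)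
  moreover have "b (4 * n) = even_part (Bpart 0 (Suc (2 * ?m))) $ (4 * n)"
    by (simp add: b_eq_Bpart_nth)
  ultimately show ?thesis by (simp add: psi_X_squared_nth)
qed

lemma b_cong_0_mod_8_nonresidue:
  assumes "Legendre (int (8 * l + 1)) (int p) = -1"
  shows "[b (4 * (p * n + l)) = 0] (mod 8)"
proof -
  have "\<not> is_square (8 * (p * n + l) + 1)"
  proof
    assume "is_square (8 * (p * n + l) + 1)"
    then obtain s where s: "8 * (p * n + l) + 1 = s\<^sup>2" by (elim is_nth_powerE)
    have "int s ^ 2 = int (8 * l + 1) + int p * int (8 * n)"
      using arg_cong[OF s, of int] by (simp add: algebra_simps)
    hence "[int s ^ 2 = int (8 * l + 1)] (mod int p)"
      unfolding cong_def by simp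
    hence "QuadRes (int p) (int (8 * l + 1))" unfolding QuadRes_def by blast
    thus False using assms unfolding Legendre_def by (auto split: if_splits)
  qed
  thus ?thesis using b_4n_cong_mod_8[of "p * n + l"] by simp
qed

lemma b_cong_mod_8_odd_square_scaling:
  assumes "odd q"
  shows "[b (4 * n) = b (4 * q\<^sup>2 * n + (q\<^sup>2 - 1) div 2)] (mod 8)"
proof -
  obtain r where r: "q\<^sup>2 = 8 * r + 1"
  proof -
    obtain t where "q = 2 * t + 1" using assms by (elim oddE)
    moreover have "even (t * t + t)" by simp
    then obtain u where "t * t + t = 2 * u" by (elim evenE)
    ultimately have "q\<^sup>2 = 8 * u + 1" by (simp add: power2_eq_square algebra_simps)
    thus ?thesis by (rule that)
  qed
  have index: "4 * q\<^sup>2 * n + (q\<^sup>2 - 1) div 2 = 4 * (q\<^sup>2 * n + r)"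
    unfolding r by (simp add: algebra_simps)
  have scaled: "8 * (q\<^sup>2 * n + r) + 1 = q\<^sup>2 * (8 * n + 1)"
    unfolding r by (simp add: algebra_simps)
  have "q\<^sup>2 \<noteq> 0" using odd_pos[OF assms] by simp
  hence "is_square (q\<^sup>2 * (8 * n + 1)) \<longleftrightarrow> is_square (8 * n + 1)"
    by (rule is_nth_power_mult_cancel_left[OF is_nth_power_nth_power])
  hence "is_square (8 * (q\<^sup>2 * n + r) + 1) \<longleftrightarrow> is_square (8 * n + 1)"
    unfolding scaled .
  thus ?thesis
    unfolding index using b_4n_cong_mod_8[of n] b_4n_cong_mod_8[of "q\<^sup>2 * n + r"]
    using cong_trans[OF _ cong_sym] by simp
qed

theorem theorem1p7:
  shows "(\<forall>(p::nat) (l::nat). prime p \<and> odd p \<and> 1 \<le> l \<and> l \<le> p - 1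
            \<and> Legendre (int (8 * l + 1)) (int p) = -1
          \<longrightarrow> (\<forall>n::nat. [b (4 * (p * n + l)) = 0] (mod 8)))
       \<and> (\<forall>(p::nat) (n::nat) (k::nat). prime p \<and> odd p
          \<longrightarrow> [b (4 * n) = b (4 * p ^ (2 * k + 2) * n + (p ^ (2 * k + 2) - 1) div 2)] (mod 8))"
proof (intro conjI allI impI)
  fix p l n :: nat
  assume "prime p \<and> odd p \<and> 1 \<le> l \<and> l \<le> p - 1 \<and> Legendre (int (8 * l + 1)) (int p) = -1"
  thus "[b (4 * (p * n + l)) = 0] (mod 8)" by (intro b_cong_0_mod_8_nonresidue) blast
next
  fix p n k :: nat
  assume "prime p \<and> odd p"
  hence "odd (p ^ (k + 1))" by simp
  moreover have "p ^ (2 * k + 2) = (p ^ (k + 1))\<^sup>2"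
    unfolding power_even_eq[symmetric] by simp
  ultimately show "[b (4 * n) = b (4 * p ^ (2 * k + 2) * n + (p ^ (2 * k + 2) - 1) div 2)] (mod 8)"
    using b_cong_mod_8_odd_square_scaling by metis
qed

end
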